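(* Let $\Phi=(V,C)$ be a $k$-uniform CNF formula in which each variable belongs to at most $d$ clauses, and suppose $2^k\ge2\mathrm{e}dk$. For $S\subseteq C$ let $Z_S$ be the number of assignments $X\in\{0,1\}^V$ such that every clause in $S$ is not satisfied by $X$ and every clause in $C\setminus S$ is satisfied by $X$. Then for every $S\subseteq C$, $Z_S\le 2^{|S|}Z_\emptyset$.
   Context: A CNF formula is $k$-uniform if every clause contains exactly $k$ literals on distinct variables (never both $x$ and $\neg x$). *)

theory Defs
  imports Complex_Main "HOL-Library.FuncSet"
begin

text \<open>A literal is a pair (variable, polarity): (x, True) is x, (x, False) is not x.
  A CNF formula with variable set V and clause set C is given by a clause
  index set C and a map lits assigning each clause its set of literals.\<close>

definition var_set :: "('v \<times> bool) set \<Rightarrow> 'v set" where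
  "var_set L = fst ` L"

definition clause_sat :: "('v \<Rightarrow> bool) \<Rightarrow> ('v \<times> bool) set \<Rightarrow> bool" where
  "clause_sat X L \<longleftrightarrow> (\<exists>(x, b) \<in> L. X x = b)"

definition k_uniform_cnf :: "'v set \<Rightarrow> 'c set \<Rightarrow> ('c \<Rightarrow> ('v \<times> bool) set) \<Rightarrow> nat \<Rightarrow> bool" where
  "k_uniform_cnf V C lits k \<longleftrightarrow> finite V \<and> finite C \<and>
     (\<forall>c\<in>C. finite (lits c) \<and> var_set (lits c) \<subseteq> V \<and>
              card (lits c) = k \<and> card (var_set (lits c)) = k)"

definition max_occ_le :: "'v set \<Rightarrow> 'c set \<Rightarrow> ('c \<Rightarrow> ('v \<times> bool) set) \<Rightarrow> nat \<Rightarrow> bool" where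
  "max_occ_le V C lits d \<longleftrightarrow> (\<forall>v\<in>V. card {c\<in>C. v \<in> var_set (lits c)} \<le> d)"

definition Z :: "'v set \<Rightarrow> 'c set \<Rightarrow> ('c \<Rightarrow> ('v \<times> bool) set) \<Rightarrow> 'c set \<Rightarrow> nat" where
  "Z V C lits S = card {X \<in> V \<rightarrow>\<^sub>E (UNIV :: bool set).
      (\<forall>c\<in>S. \<not> clause_sat X (lits c)) \<and> (\<forall>c\<in>C - S. clause_sat X (lits c))}"

end

theory Submission
  imports Defs
begin

(* A counting form of the local lemma.  Let N(T) be the number of assignments satisfying every
   clause of T and put x = 1/(2dk).  By strong induction on |T|, prescribing the values on a set
   W of variables cuts N(T) down by a factor at least 2^|W| (1 - x)^m, m the number of clauses
   of T meeting W: the clauses avoiding W do not see W, and adding back each of the m others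
   costs at most a factor 1 - x, because the assignments violating a clause take one prescribed
   value on its k variables, so by the induction hypothesis they form at most a fraction
   2^-k (1 - x)^-dk <= x.  Hence Z_S <= N(C - S) <= (1 - x)^-|S| N(C) <= 2^|S| N(C), and N(C)
   is Z of the empty set. *)

lemma clause_sat_fun_upd:
  assumes "v \<notin> var_set L"
  shows "clause_sat (X(v := b)) L \<longleftrightarrow> clause_sat X L"
  using assms unfolding clause_sat_def var_set_def by force

lemma not_clause_sat_iff:
  assumes "inj_on fst L"
  shows "\<not> clause_sat X L \<longleftrightarrow> (\<forall>v\<in>var_set L. X v = ((v, False) \<in> L))"
proof -
  have opposite: "X v = ((v, False) \<in> L) \<longleftrightarrow> X v \<noteq> b" if "(v, b) \<in> L" for v b
  proof -
    have "(v, \<not> b) \<notin> L"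
      using inj_onD[OF assms _ that] by fastforce
    with that show ?thesis
      by (cases b) auto
  qed
  have "\<not> clause_sat X L \<longleftrightarrow> (\<forall>(v, b)\<in>L. X v \<noteq> b)"
    unfolding clause_sat_def by blast
  also have "\<dots> \<longleftrightarrow> (\<forall>(v, b)\<in>L. X v = ((v, False) \<in> L))"
    using opposite by blast
  also have "\<dots> \<longleftrightarrow> (\<forall>v\<in>var_set L. X v = ((v, False) \<in> L))"
    unfolding var_set_def by force
  finally show ?thesis .
qed

lemma card_agreeing_mult_two_pow:
  fixes A :: "('a \<Rightarrow> bool) set"
  assumes "finite A" "finite W" and closed: "\<And>X v b. X \<in> A \<Longrightarrow> v \<in> W \<Longrightarrow> X(v := b) \<in> A"
  shows "card {X \<in> A. \<forall>v\<in>W. X v = \<sigma> v} * 2 ^ card W = card A"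
  using assms(2,3)
proof (induction W rule: finite_induct)
  case empty
  then show ?case by simp
next
  case (insert v W)
  define agree where "agree = {X \<in> A. \<forall>w\<in>W. X w = \<sigma> w}"
  define same where "same = {X \<in> agree. X v = \<sigma> v}"
  define flipped where "flipped = {X \<in> agree. X v \<noteq> \<sigma> v}"
  define flip where "flip X = X(v := \<not> X v)" for X :: "'a \<Rightarrow> bool"
  have flip_mem: "flip X \<in> A" if "X \<in> A" for X
    unfolding flip_def by (rule insert.prems[OF that]) simp
  have flip_at: "flip X v = (\<not> X v)" "flip (flip X) = X"
    and flip_off: "w \<in> W \<Longrightarrow> flip X w = X w" for X w
    unfolding flip_def using insert.hyps(2) by auto
  have "bij_betw flip same flipped"
  proof (rule bij_betw_byWitness[where f' = flip])
    show "\<forall>X\<in>same. flip (flip X) = X" "\<forall>X\<in>flipped. flip (flip X) = X"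
      using flip_at(2) by blast+
    show "flip ` same \<subseteq> flipped" "flip ` flipped \<subseteq> same"
      unfolding same_def flipped_def agree_def using flip_mem flip_at(1) flip_off by auto
  qed
  then have "card same = card flipped"
    by (rule bij_betw_same_card)
  moreover have "card agree = card same + card flipped"
  proof -
    have "agree = same \<union> flipped" "same \<inter> flipped = {}"
      unfolding same_def flipped_def by auto
    moreover have "finite agree"
      unfolding agree_def using \<open>finite A\<close> by simp
    ultimately show ?thesis
      by (simp add: card_Un_disjoint)
  qed
  ultimately have "card same * 2 ^ card (insert v W) = card agree * 2 ^ card W"
    using insert.hyps by simp
  also have "\<dots> = card A"
    unfolding agree_def using insert by simp
  also have "same = {X \<in> A. \<forall>w\<in>insert v W. X w = \<sigma> w}"
    unfolding same_def agree_def by auto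
  finally show ?case .
qed

lemma mult_pow_card_le_insert_chain:
  fixes f :: "'a set \<Rightarrow> real"
  assumes "finite R" "A \<inter> R = {}" "0 \<le> c"
    and step: "\<And>T t. A \<subseteq> T \<Longrightarrow> T \<subseteq> A \<union> R \<Longrightarrow> t \<in> R \<Longrightarrow> t \<notin> T \<Longrightarrow> c * f T \<le> f (insert t T)"
  shows "f A * c ^ card R \<le> f (A \<union> R)"
  using assms(1,2) step
proof (induction R rule: finite_induct)
  case empty
  then show ?case by simp
next
  case (insert t R)
  have "f A * c ^ card R \<le> f (A \<union> R)"
  proof (rule insert.IH)
    show "A \<inter> R = {}"
      using insert.prems(1) by auto
    fix T s
    assume "A \<subseteq> T" "T \<subseteq> A \<union> R" "s \<in> R" "s \<notin> T"
    then show "c * f T \<le> f (insert s T)"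
      by (intro insert.prems(2)) auto
  qed
  then have "c * (f A * c ^ card R) \<le> c * f (A \<union> R)"
    using \<open>0 \<le> c\<close> by (rule mult_left_mono)
  also have "\<dots> \<le> f (insert t (A \<union> R))"
    using insert by (intro insert.prems(2)) auto
  finally show ?case
    using insert.hyps by (simp add: algebra_simps)
qed

lemma half_le_pow_one_minus_inverse:
  "1 / 2 \<le> (1 - 1 / (2 * real n)) ^ n"
proof (cases "n = 0")
  case False
  have "1 + real n * (- (1 / (2 * real n))) \<le> (1 + - (1 / (2 * real n))) ^ n"
    using False by (intro Bernoulli_inequality) (simp add: field_simps)
  then show ?thesis
    using False by simp
qed simp

locale uniform_cnf =
  fixes V :: "'v set" and C :: "'c set" and lits :: "'c \<Rightarrow> ('v \<times> bool) set"
    and k d :: nat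
  assumes uniform: "k_uniform_cnf V C lits k"
    and occurrences: "max_occ_le V C lits d"
begin

lemma finite_V: "finite V" and finite_C: "finite C"
  using uniform unfolding k_uniform_cnf_def by auto

lemma var_set_subset: "t \<in> C \<Longrightarrow> var_set (lits t) \<subseteq> V"
  and card_var_set: "t \<in> C \<Longrightarrow> card (var_set (lits t)) = k"
  using uniform unfolding k_uniform_cnf_def by auto

lemma not_clause_sat_iff_agree:
  assumes "t \<in> C"
  shows "\<not> clause_sat X (lits t) \<longleftrightarrow> (\<forall>v\<in>var_set (lits t). X v = ((v, False) \<in> lits t))"
proof (rule not_clause_sat_iff)
  have "finite (lits t)" "card (fst ` lits t) = card (lits t)"
    using uniform assms unfolding k_uniform_cnf_def var_set_def by auto
  then show "inj_on fst (lits t)"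
    by (rule eq_card_imp_inj_on)
qed

lemma one_le_occurrence_bound:
  assumes "C \<noteq> {}" "1 \<le> k"
  shows "1 \<le> d"
proof -
  obtain t where "t \<in> C"
    using assms(1) by auto
  moreover obtain v where "v \<in> var_set (lits t)"
    using card_var_set[OF \<open>t \<in> C\<close>] assms(2) by (metis card.empty ex_in_conv not_one_le_zero)
  ultimately have "v \<in> V" "t \<in> {c \<in> C. v \<in> var_set (lits c)}"
    using var_set_subset by blast+
  then have "0 < card {c \<in> C. v \<in> var_set (lits c)}"
    using finite_C by (auto simp: card_gt_0_iff)
  then have "1 \<le> card {c \<in> C. v \<in> var_set (lits c)}"
    by simp
  also have "\<dots> \<le> d"
    using occurrences \<open>v \<in> V\<close> unfolding max_occ_le_def by blast
  finally show ?thesis .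
qed

definition models :: "'c set \<Rightarrow> ('v \<Rightarrow> bool) set" where
  "models T = {X \<in> V \<rightarrow>\<^sub>E (UNIV :: bool set). \<forall>t\<in>T. clause_sat X (lits t)}"

definition clauses_meeting :: "'c set \<Rightarrow> 'v set \<Rightarrow> 'c set" where
  "clauses_meeting T W = {t \<in> T. var_set (lits t) \<inter> W \<noteq> {}}"

lemma finite_models: "finite (models T)"
  unfolding models_def using finite_V by (simp add: finite_PiE)

lemma models_antimono: "T \<subseteq> T' \<Longrightarrow> models T' \<subseteq> models T"
  unfolding models_def by auto

lemma card_models_agreeing:
  assumes "W \<subseteq> V" "clauses_meeting T W = {}"
  shows "card {X \<in> models T. \<forall>v\<in>W. X v = \<sigma> v} * 2 ^ card W = card (models T)"
proof (rule card_agreeing_mult_two_pow)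
  show "finite W"
    using assms(1) finite_V finite_subset by blast
  show "X(v := b) \<in> models T" if "X \<in> models T" "v \<in> W" for X v b
  proof -
    have "v \<notin> var_set (lits t)" if "t \<in> T" for t
      using assms \<open>v \<in> W\<close> that unfolding clauses_meeting_def by blast
    then show ?thesis
      using that assms(1) unfolding models_def
      by (auto simp: clause_sat_fun_upd PiE_iff extensional_def)
  qed
qed (rule finite_models)

lemma card_agreeing_mult_pow_le:
  assumes "W \<subseteq> V"
  shows "card {X \<in> models T. \<forall>v\<in>W. X v = \<sigma> v} * 2 ^ card W
           \<le> card (models (T - clauses_meeting T W))"
proof -
  have "card {X \<in> models T. \<forall>v\<in>W. X v = \<sigma> v}
          \<le> card {X \<in> models (T - clauses_meeting T W). \<forall>v\<in>W. X v = \<sigma> v}"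
    using models_antimono[of "T - clauses_meeting T W" T] finite_models
    by (intro card_mono) auto
  also have "\<dots> * 2 ^ card W = card (models (T - clauses_meeting T W))"
    using assms by (intro card_models_agreeing) (auto simp: clauses_meeting_def)
  finally show ?thesis
    by simp
qed

lemma card_clauses_meeting_le:
  assumes "T \<subseteq> C" "W \<subseteq> V"
  shows "card (clauses_meeting T W) \<le> d * card W"
proof -
  have "finite W"
    using assms(2) finite_V finite_subset by blast
  have "clauses_meeting T W \<subseteq> (\<Union>v\<in>W. {c \<in> C. v \<in> var_set (lits c)})"
    using assms(1) unfolding clauses_meeting_def by auto
  then have "card (clauses_meeting T W) \<le> card (\<Union>v\<in>W. {c \<in> C. v \<in> var_set (lits c)})"
    using \<open>finite W\<close> finite_C by (intro card_mono) auto
  also have "\<dots> \<le> (\<Sum>v\<in>W. card {c \<in> C. v \<in> var_set (lits c)})"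
    by (rule card_UN_le[OF \<open>finite W\<close>])
  also have "\<dots> \<le> (\<Sum>v\<in>W. d)"
    using occurrences assms(2) unfolding max_occ_le_def by (intro sum_mono) auto
  finally show ?thesis
    by (simp add: mult.commute)
qed

end

locale lll_weighted_cnf = uniform_cnf V C lits k d
  for V :: "'v set" and C :: "'c set" and lits :: "'c \<Rightarrow> ('v \<times> bool) set" and k d +
  fixes x :: real
  assumes x_nonneg: "0 \<le> x" and x_le_one: "x \<le> 1"
    and lll_condition: "1 \<le> x * 2 ^ k * (1 - x) ^ (d * k)"
begin

definition marginal_bound :: "'c set \<Rightarrow> bool" where
  "marginal_bound T \<longleftrightarrow> (\<forall>W \<sigma>. W \<subseteq> V \<longrightarrow>
     real (card {X \<in> models T. \<forall>v\<in>W. X v = \<sigma> v}) * 2 ^ card W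
       * (1 - x) ^ card (clauses_meeting T W) \<le> card (models T))"

lemma marginal_boundD:
  assumes "marginal_bound T" "W \<subseteq> V"
  shows "real (card {X \<in> models T. \<forall>v\<in>W. X v = \<sigma> v}) * 2 ^ card W
           * (1 - x) ^ card (clauses_meeting T W) \<le> card (models T)"
  using assms unfolding marginal_bound_def by blast

lemma card_models_insert_ge_if_marginal_bound:
  assumes "T \<subseteq> C" "t \<in> C" "marginal_bound T"
  shows "(1 - x) * card (models T) \<le> card (models (insert t T))"
proof -
  define W where "W = var_set (lits t)"
  define violating where "violating = {X \<in> models T. \<not> clause_sat X (lits t)}"
  have "models T = models (insert t T) \<union> violating" "models (insert t T) \<inter> violating = {}"
    unfolding models_def violating_def by auto
  moreover have "finite violating"
    unfolding violating_def using finite_models by simp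
  ultimately have split: "card (models T) = card (models (insert t T)) + card violating"
    using finite_models by (simp add: card_Un_disjoint)
  have "W \<subseteq> V" "card W = k"
    unfolding W_def using assms(2) var_set_subset card_var_set by auto
  have "violating = {X \<in> models T. \<forall>v\<in>W. X v = ((v, False) \<in> lits t)}"
    unfolding violating_def W_def using not_clause_sat_iff_agree[OF assms(2)] by simp
  then have bound: "card violating * 2 ^ k * (1 - x) ^ card (clauses_meeting T W) \<le> card (models T)"
    using marginal_boundD[OF assms(3) \<open>W \<subseteq> V\<close>] \<open>card W = k\<close> by simp
  have "(1 - x) ^ (d * k) \<le> (1 - x) ^ card (clauses_meeting T W)"
    using card_clauses_meeting_le[OF assms(1) \<open>W \<subseteq> V\<close>] \<open>card W = k\<close> x_nonneg x_le_one
    by (intro power_decreasing) auto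
  have "real (card violating) \<le> card violating * (x * 2 ^ k * (1 - x) ^ (d * k))"
    using mult_left_mono[OF lll_condition, of "real (card violating)"] by simp
  also have "\<dots> = x * (card violating * 2 ^ k * (1 - x) ^ (d * k))"
    by (simp add: ac_simps)
  also have "\<dots> \<le> x * (card violating * 2 ^ k * (1 - x) ^ card (clauses_meeting T W))"
    using \<open>(1 - x) ^ (d * k) \<le> _\<close> x_nonneg by (intro mult_left_mono) auto
  also have "\<dots> \<le> x * card (models T)"
    using bound x_nonneg by (rule mult_left_mono)
  finally show ?thesis
    using split by (simp add: algebra_simps)
qed

lemma marginal_bound: "T \<subseteq> C \<Longrightarrow> marginal_bound T"
proof (induction "card T" arbitrary: T rule: less_induct)
  case less
  show ?case
    unfolding marginal_bound_def
  proof (intro allI impI)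
    fix W and \<sigma> :: "'v \<Rightarrow> bool"
    assume "W \<subseteq> V"
    define near where "near = clauses_meeting T W"
    define far where "far = T - near"
    have "finite T"
      using less.prems finite_C finite_subset by blast
    have "far \<union> near = T" "far \<inter> near = {}" "near \<subseteq> T"
      unfolding far_def near_def clauses_meeting_def by auto
    have "card {X \<in> models T. \<forall>v\<in>W. X v = \<sigma> v} * 2 ^ card W \<le> card (models far)"
      using card_agreeing_mult_pow_le[OF \<open>W \<subseteq> V\<close>] unfolding far_def near_def .
    then have "real (card {X \<in> models T. \<forall>v\<in>W. X v = \<sigma> v}) * 2 ^ card W \<le> card (models far)"
      using of_nat_mono by fastforce
    then have "real (card {X \<in> models T. \<forall>v\<in>W. X v = \<sigma> v}) * 2 ^ card W * (1 - x) ^ card near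
        \<le> card (models far) * (1 - x) ^ card near"
      using x_le_one by (intro mult_right_mono) auto
    also have "\<dots> \<le> card (models (far \<union> near))"
    proof (rule mult_pow_card_le_insert_chain)
      fix T' t
      assume "far \<subseteq> T'" "T' \<subseteq> far \<union> near" "t \<in> near" "t \<notin> T'"
      then have "T' \<subset> T"
        using \<open>far \<union> near = T\<close> \<open>near \<subseteq> T\<close> by auto
      then have "marginal_bound T'"
        using less.hyps[of T'] psubset_card_mono[OF \<open>finite T\<close>] less.prems by blast
      then show "(1 - x) * card (models T') \<le> card (models (insert t T'))"
        using \<open>T' \<subset> T\<close> \<open>t \<in> near\<close> \<open>near \<subseteq> T\<close> less.prems
        by (intro card_models_insert_ge_if_marginal_bound) auto
    qed (use \<open>finite T\<close> \<open>near \<subseteq> T\<close> \<open>far \<inter> near = {}\<close> x_le_one in \<open>auto intro: finite_subset\<close>)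
    finally show "real (card {X \<in> models T. \<forall>v\<in>W. X v = \<sigma> v}) * 2 ^ card W
        * (1 - x) ^ card (clauses_meeting T W) \<le> card (models T)"
      using \<open>far \<union> near = T\<close> unfolding near_def by simp
  qed
qed

lemma card_models_insert_ge:
  "T \<subseteq> C \<Longrightarrow> t \<in> C \<Longrightarrow> (1 - x) * card (models T) \<le> card (models (insert t T))"
  using card_models_insert_ge_if_marginal_bound marginal_bound by blast

lemma Z_mult_pow_le_Z_empty:
  assumes "S \<subseteq> C"
  shows "Z V C lits S * (1 - x) ^ card S \<le> Z V C lits {}"
proof -
  have "Z V C lits S \<le> card (models (C - S))"
    unfolding Z_def models_def using finite_models[of "C - S"]
    by (intro card_mono) (auto simp: models_def)
  then have "Z V C lits S * (1 - x) ^ card S \<le> card (models (C - S)) * (1 - x) ^ card S"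
    using x_le_one by (intro mult_right_mono) auto
  also have "\<dots> \<le> card (models ((C - S) \<union> S))"
    using assms finite_C finite_subset x_le_one
    by (intro mult_pow_card_le_insert_chain card_models_insert_ge) auto
  also have "(C - S) \<union> S = C"
    using assms by auto
  also have "card (models C) = Z V C lits {}"
    unfolding Z_def models_def by simp
  finally show ?thesis .
qed

lemma Z_le_two_pow_card_mult_Z_empty:
  assumes "S \<subseteq> C" "x \<le> 1 / 2"
  shows "Z V C lits S \<le> 2 ^ card S * Z V C lits {}"
proof -
  have "Z V C lits S * (1 / 2) ^ card S \<le> Z V C lits S * (1 - x) ^ card S"
    using assms(2) by (intro mult_left_mono power_mono) auto
  also have "\<dots> \<le> Z V C lits {}"
    using Z_mult_pow_le_Z_empty[OF assms(1)] .
  finally have "real (Z V C lits S) \<le> real (2 ^ card S * Z V C lits {})"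
    by (simp add: field_simps)
  then show ?thesis
    by (rule of_nat_le_iff[THEN iffD1])
qed

end

lemma (in uniform_cnf) lll_weighted_cnf_inverse_weight:
  assumes "1 \<le> d" "1 \<le> k" "4 * real d * real k \<le> 2 ^ k"
  shows "lll_weighted_cnf V C lits k d (1 / (2 * real d * real k))"
    and "1 / (2 * real d * real k) \<le> 1 / 2"
proof -
  define x where "x = 1 / (2 * real d * real k)"
  have "1 \<le> real d * real k"
    using assms(1,2) by (metis mult_le_mono nat_mult_1 of_nat_1 of_nat_le_iff of_nat_mult)
  then have "0 \<le> x" "x \<le> 1 / 2" "2 \<le> x * 2 ^ k"
    using assms(3) unfolding x_def by (simp_all add: field_simps)
  moreover have "1 / 2 \<le> (1 - x) ^ (d * k)"
    using half_le_pow_one_minus_inverse[of "d * k"] unfolding x_def by (simp add: mult.assoc)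
  ultimately have "2 * (1 / 2) \<le> x * 2 ^ k * (1 - x) ^ (d * k)"
    by (intro mult_mono) auto
  with \<open>0 \<le> x\<close> \<open>x \<le> 1 / 2\<close> show "lll_weighted_cnf V C lits k d x"
    by unfold_locales simp_all
  show "x \<le> 1 / 2" by fact
qed

theorem lemma7p7:
  fixes V :: "'v set" and C :: "'c set" and lits :: "'c \<Rightarrow> ('v \<times> bool) set"
    and k d :: nat and S :: "'c set"
  assumes "k_uniform_cnf V C lits k"
    and "max_occ_le V C lits d"
    and "(2::real) ^ k \<ge> 2 * exp 1 * real d * real k"
    and "k \<ge> 1"
    and "S \<subseteq> C"
  shows "Z V C lits S \<le> 2 ^ card S * Z V C lits {}"
proof (cases "S = {}")
  case False
  interpret uniform_cnf V C lits k d
    using assms(1,2) by unfold_locales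
  have "1 \<le> d"
    using one_le_occurrence_bound False assms(4,5) by blast
  have "2 * 2 * real d * real k \<le> 2 * exp 1 * real d * real k"
    using exp_ge_add_one_self[of 1] by (intro mult_right_mono) auto
  then have "4 * real d * real k \<le> 2 ^ k"
    using assms(3) by linarith
  then interpret lll_weighted_cnf V C lits k d "1 / (2 * real d * real k)"
    using \<open>1 \<le> d\<close> assms(4) lll_weighted_cnf_inverse_weight(1) by blast
  show ?thesis
    using Z_le_two_pow_card_mult_Z_empty lll_weighted_cnf_inverse_weight(2)
      \<open>1 \<le> d\<close> assms(4,5) \<open>4 * real d * real k \<le> 2 ^ k\<close> by blast
qed simp

end
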